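(* For every unweighted congestion game $\mathcal{G}$ with affine latency functions, $\mathrm{Apx}^1_\emptyset(\mathcal{G})\le 2+\sqrt{5}$.
   Context: A weighted congestion game consists of a finite set $[n]=\{1,\dots,n\}$ of players, a finite set $E$ of resources, for each player $i$ a weight $w_i>0$ and a nonempty finite strategy set $\Sigma_i\subseteq 2^E$, and for each resource $e$ a latency function $\ell_e:\mathbb{R}_{\ge 0}\to\mathbb{R}_{\ge 0}$. It is unweighted if $w_i=1$ for all $i$. Affine latency functions means $\ell_e(x)=\alpha_e x+\beta_e$ with $\alpha_e,\beta_e\ge 0$. For a (possibly partial) profile in which each player in some subset $P\subseteq[n]$ has chosen a strategy $s_i$, the congestion of $e$ is $L_e=\sum_{i\in P:\,e\in s_i}w_i$ and the cost of a player $i\in P$ is $\sum_{e\in s_i}\ell_e(L_e)$. For a full profile $S$, $\mathrm{SUM}(S)=\sum_{i\in[n]}c_i(S)$ and $S^*$ minimizes $\mathrm{SUM}$. A one-round walk from the empty strategy profile: starting with no player having chosen a strategy, the players arrive one at a time in some order, and each arriving player selects a best response, i.e., a strategy in her strategy set minimizing her cost given the strategies already chosen by the previously arrived players (later players not yet present); the outcome is the full profile after all $n$ players have chosen. $\mathrm{Apx}^1_\emptyset(\mathcal{G})$ is the maximum, over all orderings of the players and all choices among best responses, of $\mathrm{SUM}(\text{outcome})/\mathrm{SUM}(S^* )$. *)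

theory Defs
  imports Complex_Main
begin

text \<open>Unweighted congestion games with affine latencies l_e(x) = alpha e * x + beta e.
  Players are 0..n-1; a (possibly partial) profile is a function s :: nat => 'e set,
  together with the set P of players that are present.\<close>

definition load :: "nat set \<Rightarrow> (nat \<Rightarrow> 'e set) \<Rightarrow> 'e \<Rightarrow> real" where
  "load P s e = real (card {i \<in> P. e \<in> s i})"

definition pcost :: "('e \<Rightarrow> real) \<Rightarrow> ('e \<Rightarrow> real) \<Rightarrow> nat set \<Rightarrow> (nat \<Rightarrow> 'e set) \<Rightarrow> nat \<Rightarrow> real" where
  "pcost \<alpha> \<beta> P s i = (\<Sum>e\<in>s i. \<alpha> e * load P s e + \<beta> e)"

definition feasible :: "nat \<Rightarrow> (nat \<Rightarrow> 'e set set) \<Rightarrow> (nat \<Rightarrow> 'e set) \<Rightarrow> bool" where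
  "feasible n \<Sigma> s \<longleftrightarrow> (\<forall>i<n. s i \<in> \<Sigma> i)"

definition SUMcost :: "nat \<Rightarrow> ('e \<Rightarrow> real) \<Rightarrow> ('e \<Rightarrow> real) \<Rightarrow> (nat \<Rightarrow> 'e set) \<Rightarrow> real" where
  "SUMcost n \<alpha> \<beta> s = (\<Sum>i<n. pcost \<alpha> \<beta> {..<n} s i)"

text \<open>An arrival order is a list enumerating the players exactly once. The k-th arriving player
  pi!k, facing the players set (take k pi) already present, picks a best response.\<close>
definition one_round_walk_outcome ::
  "nat \<Rightarrow> (nat \<Rightarrow> 'e set set) \<Rightarrow> ('e \<Rightarrow> real) \<Rightarrow> ('e \<Rightarrow> real) \<Rightarrow> nat list \<Rightarrow> (nat \<Rightarrow> 'e set) \<Rightarrow> bool" where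
  "one_round_walk_outcome n \<Sigma> \<alpha> \<beta> \<pi> s \<longleftrightarrow>
     distinct \<pi> \<and> set \<pi> = {..<n} \<and>
     (\<forall>k<n. s (\<pi>!k) \<in> \<Sigma> (\<pi>!k) \<and>
        (\<forall>t\<in>\<Sigma> (\<pi>!k).
           pcost \<alpha> \<beta> (insert (\<pi>!k) (set (take k \<pi>))) s (\<pi>!k)
             \<le> pcost \<alpha> \<beta> (insert (\<pi>!k) (set (take k \<pi>))) (s((\<pi>!k) := t)) (\<pi>!k)))"

definition OPT :: "nat \<Rightarrow> (nat \<Rightarrow> 'e set set) \<Rightarrow> ('e \<Rightarrow> real) \<Rightarrow> ('e \<Rightarrow> real) \<Rightarrow> real" where
  "OPT n \<Sigma> \<alpha> \<beta> = Inf {SUMcost n \<alpha> \<beta> s | s. feasible n \<Sigma> s}"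

definition Apx1_empty :: "nat \<Rightarrow> (nat \<Rightarrow> 'e set set) \<Rightarrow> ('e \<Rightarrow> real) \<Rightarrow> ('e \<Rightarrow> real) \<Rightarrow> real" where
  "Apx1_empty n \<Sigma> \<alpha> \<beta> =
     Sup {SUMcost n \<alpha> \<beta> s / OPT n \<Sigma> \<alpha> \<beta> | s. \<exists>\<pi>. one_round_walk_outcome n \<Sigma> \<alpha> \<beta> \<pi> s}"

end

theory Submission
  imports Defs
begin

(* Writing a e, b e for the loads of resource e
   under s and S, the k-th arriving player pays at most
   the cost of switching to her strategy in S, and that deviation costs at most
   sum over e in S of alpha e * (a e + 1) + beta e, because the final load a e dominates the
   load met on arrival.  Summing over arrivals, the arrival costs telescope to
   1/2 * sum over e of alpha e * a e * (a e + 1) + 2 * beta e * a e, giving the potential-type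
   inequality  sum_e alpha a (a+1) + 2 beta a <= 2 * sum_e b (alpha (a+1) + beta).
   Adding phi = (1 + sqrt 5)/2 times this slack to SUM(s) and using, resource by resource, a
   purely arithmetic inequality on natural numbers yields SUM(s) <= (2 + sqrt 5) SUM(S). *)

text \<open>The arithmetic core: for natural numbers a and b, with the golden ratio phi,
  a^2 + phi (2ab + 2b - a^2 - a) <= (2 + sqrt 5) b^2.  The case b >= 2 follows by completing
  the square; b = 0 and b = 1 are checked directly, the latter using integrality of a.\<close>
lemma golden_key_inequality:
  fixes a b :: nat
  defines "\<phi> \<equiv> (1 + sqrt 5) / 2"
  shows "real a ^ 2 + \<phi> * (2 * real a * real b + 2 * real b - real a ^ 2 - real a)
         \<le> (2 + sqrt 5) * real b ^ 2"
proof -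
  define t where "t = sqrt 5"
  have t_sq: "t * t = 5" unfolding t_def by simp
  have t_sq': "t * (t * z) = 5 * z" for z using t_sq by (metis mult.assoc)
  have t_gt2: "t > 2" unfolding t_def by (simp add: real_less_rsqrt)
  have t_lt3: "t < 3" unfolding t_def using real_sqrt_less_mono[of 5 "3^2"] by simp
  define x where "x = real a"
  define y where "y = real b"
  define gap where "gap = (2 + t) * y\<^sup>2 - (x\<^sup>2 + (1 + t) / 2 * (2 * x * y + 2 * y - x\<^sup>2 - x))"
  have "gap \<ge> 0"
  proof (cases "b \<ge> 2")
    case True
    then have "y \<ge> 2" unfolding y_def by simp
    define sq where "sq = (t - 1) / 2 * (x - (3 + t) / 2 * y + (3 + t) / 4)\<^sup>2"
    have "gap = sq + (y - (2 + t) / 4)"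
      unfolding gap_def sq_def by (simp add: algebra_simps power2_eq_square t_sq t_sq' field_simps)
    moreover have "sq \<ge> 0" unfolding sq_def using t_gt2 by simp
    ultimately show ?thesis using \<open>y \<ge> 2\<close> t_lt3 by simp
  next
    case False
    then consider "b = 0" | "b = 1" by linarith
    then show ?thesis
    proof cases
      case 1
      then have "gap = (t - 1) / 2 * x\<^sup>2 + (1 + t) / 2 * x"
        unfolding gap_def y_def by (simp add: algebra_simps power2_eq_square field_simps)
      then show ?thesis using t_gt2 unfolding x_def by simp
    next
      case 2
      then have "gap = (t - 1) / 2 * ((x - 1) * (x - (1 + t) / 2))"
        unfolding gap_def y_def by (simp add: algebra_simps power2_eq_square t_sq t_sq' field_simps)
      moreover have "(x - 1) * (x - (1 + t) / 2) \<ge> 0"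
      proof (cases "a \<le> 1")
        case True
        then have "x \<le> 1" unfolding x_def by simp
        then show ?thesis using t_gt2 by (intro mult_nonpos_nonpos) auto
      next
        case False
        then have "x \<ge> 2" unfolding x_def by simp
        then show ?thesis using t_lt3 by (intro mult_nonneg_nonneg) auto
      qed
      moreover have "(t - 1) / 2 \<ge> 0" using t_gt2 by simp
      ultimately show ?thesis by (metis mult_nonneg_nonneg)
    qed
  qed
  then show ?thesis unfolding gap_def x_def y_def t_def \<phi>_def by simp
qed

lemma resource_inequality:
  fixes a b :: nat and x y :: real
  defines "\<phi> \<equiv> (1 + sqrt 5) / 2"
  assumes "x \<ge> 0" "y \<ge> 0"
  shows "real a * (x * real a + y)
           + \<phi> * (2 * real b * (x * (real a + 1) + y) - (x * real a * (real a + 1) + 2 * y * real a))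
         \<le> (2 + sqrt 5) * (real b * (x * real b + y))"
proof -
  define gap where "gap = (2 + sqrt 5) * real b ^ 2
      - (real a ^ 2 + \<phi> * (2 * real a * real b + 2 * real b - real a ^ 2 - real a))"
  have "gap \<ge> 0" using golden_key_inequality[of a b] unfolding gap_def \<phi>_def by simp
  then have "x * gap + y * (real b + sqrt 5 * real a) \<ge> 0" using assms(2,3) by simp
  moreover have "(2 + sqrt 5) * (real b * (x * real b + y))
      - (real a * (x * real a + y)
           + \<phi> * (2 * real b * (x * (real a + 1) + y) - (x * real a * (real a + 1) + 2 * y * real a)))
      = x * gap + y * (real b + sqrt 5 * real a)"
    unfolding gap_def \<phi>_def by (simp add: algebra_simps power2_eq_square field_simps)
  ultimately show ?thesis by linarith
qed

lemma load_cong: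
  assumes "\<forall>j\<in>P. s j = s' j"
  shows "load P s e = load P s' e"
proof -
  have "{i \<in> P. e \<in> s i} = {i \<in> P. e \<in> s' i}" using assms by auto
  then show ?thesis unfolding load_def by simp
qed

lemma pcost_cong:
  assumes "\<forall>j\<in>P. s j = s' j" and "s i = s' i"
  shows "pcost \<alpha> \<beta> P s i = pcost \<alpha> \<beta> P s' i"
  unfolding pcost_def using load_cong[OF assms(1)] assms(2) by simp

lemma load_insert:
  assumes "finite Q" "p \<notin> Q"
  shows "load (insert p Q) s e = load Q s e + (if e \<in> s p then 1 else 0)"
proof (cases "e \<in> s p")
  case True
  then have "{i \<in> insert p Q. e \<in> s i} = insert p {i \<in> Q. e \<in> s i}" by auto
  then show ?thesis using True assms unfolding load_def by simp
next
  case False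
  then have "{i \<in> insert p Q. e \<in> s i} = {i \<in> Q. e \<in> s i}" by auto
  then show ?thesis using False unfolding load_def by simp
qed

lemma sum_over_strategies:
  assumes "finite E" "finite I" "\<forall>i\<in>I. s i \<subseteq> E"
  shows "(\<Sum>i\<in>I. \<Sum>e\<in>s i. g e) = (\<Sum>e\<in>E. load I s e * g e)"
proof -
  have "(\<Sum>i\<in>I. \<Sum>e\<in>s i. g e) = (\<Sum>i\<in>I. \<Sum>e\<in>E. if e \<in> s i then g e else 0)"
    by (rule sum.cong[OF refl])
      (use assms(3) in \<open>simp add: sum.inter_restrict[OF assms(1), symmetric] Int_absorb1 Int_commute\<close>)
  also have "\<dots> = (\<Sum>e\<in>E. \<Sum>i\<in>I. if e \<in> s i then g e else 0)"
    by (rule sum.swap)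
  also have "\<dots> = (\<Sum>e\<in>E. load I s e * g e)"
    by (rule sum.cong[OF refl]) (simp add: sum.If_cases[OF assms(2)] load_def Int_def conj_commute)
  finally show ?thesis .
qed

lemma SUMcost_by_resource:
  assumes "finite E" "\<forall>i<n. s i \<subseteq> E"
  shows "SUMcost n \<alpha> \<beta> s = (\<Sum>e\<in>E. load {..<n} s e * (\<alpha> e * load {..<n} s e + \<beta> e))"
  unfolding SUMcost_def pcost_def
  using sum_over_strategies[OF assms(1), of "{..<n}" s "\<lambda>e. \<alpha> e * load {..<n} s e + \<beta> e"] assms(2)
  by simp

lemma SUMcost_nonneg:
  assumes "\<forall>i<n. s i \<subseteq> E" "\<forall>e\<in>E. \<alpha> e \<ge> 0 \<and> \<beta> e \<ge> 0"
  shows "SUMcost n \<alpha> \<beta> s \<ge> 0"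
  unfolding SUMcost_def pcost_def load_def using assms by (force intro!: sum_nonneg)

definition arrival_cost ::
  "('e \<Rightarrow> real) \<Rightarrow> ('e \<Rightarrow> real) \<Rightarrow> nat list \<Rightarrow> (nat \<Rightarrow> 'e set) \<Rightarrow> nat \<Rightarrow> real" where
  "arrival_cost \<alpha> \<beta> \<pi> s k = pcost \<alpha> \<beta> (insert (\<pi>!k) (set (take k \<pi>))) s (\<pi>!k)"

text \<open>Arrival accounting: when a resource of slope alpha and offset beta is entered by players
  one after the other, they pay alpha (1 + ... + L) + beta L in total, where L is its final
  load.\<close>
lemma arrival_cost_sum:
  assumes "distinct \<pi>" "finite E" "\<forall>j<length \<pi>. s (\<pi>!j) \<subseteq> E" "k \<le> length \<pi>"
  shows "2 * (\<Sum>j<k. arrival_cost \<alpha> \<beta> \<pi> s j)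
    = (\<Sum>e\<in>E. \<alpha> e * load (set (take k \<pi>)) s e * (load (set (take k \<pi>)) s e + 1)
               + 2 * \<beta> e * load (set (take k \<pi>)) s e)"
  using assms(4)
proof (induction k)
  case 0
  show ?case by (simp add: load_def)
next
  case (Suc k)
  then have k: "k < length \<pi>" by simp
  define p where "p = \<pi> ! k"
  define Q where "Q = set (take k \<pi>)"
  define L where "L = load Q s"
  have "p \<notin> Q"
    unfolding p_def Q_def using set_take_disj_set_drop_if_distinct[OF assms(1), of k k] k
    by (metis Cons_nth_drop_Suc disjoint_iff list.set_intros(1) order_refl)
  then have new_load: "load (insert p Q) s e = L e + (if e \<in> s p then 1 else 0)" for e
    unfolding L_def Q_def by (simp add: load_insert)
  have prefix: "set (take (Suc k) \<pi>) = insert p Q"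
    by (simp add: take_Suc_conv_app_nth k p_def Q_def)
  have "s p \<subseteq> E" using assms(3) k unfolding p_def by auto
  let ?before = "\<lambda>e. \<alpha> e * L e * (L e + 1) + 2 * \<beta> e * L e"
  let ?paid = "\<lambda>e. 2 * (\<alpha> e * (L e + 1) + \<beta> e)"
  have "(\<Sum>e\<in>E. \<alpha> e * load (insert p Q) s e * (load (insert p Q) s e + 1)
               + 2 * \<beta> e * load (insert p Q) s e)
        = (\<Sum>e\<in>E. ?before e + (if e \<in> s p then ?paid e else 0))"
    by (rule sum.cong[OF refl]) (simp add: new_load algebra_simps)
  also have "\<dots> = (\<Sum>e\<in>E. ?before e) + (\<Sum>e\<in>s p. ?paid e)"
    using \<open>s p \<subseteq> E\<close>
    by (simp add: sum.distrib sum.inter_restrict[OF assms(2), symmetric] Int_absorb1 Int_commute)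
  also have "(\<Sum>e\<in>s p. ?paid e) = 2 * arrival_cost \<alpha> \<beta> \<pi> s k"
    unfolding arrival_cost_def pcost_def using new_load
    by (simp add: sum_distrib_left p_def Q_def)
  also have "(\<Sum>e\<in>E. ?before e) = 2 * (\<Sum>j<k. arrival_cost \<alpha> \<beta> \<pi> s j)"
    using Suc k unfolding L_def Q_def by simp
  finally show ?case using prefix by simp
qed

lemma deviation_cost_le:
  assumes "finite Q" "P \<subseteq> Q" "\<forall>e\<in>T. \<alpha> e \<ge> 0"
  shows "pcost \<alpha> \<beta> P (s(p := T)) p \<le> (\<Sum>e\<in>T. \<alpha> e * (load Q s e + 1) + \<beta> e)"
  unfolding pcost_def fun_upd_same
proof (rule sum_mono)
  fix e assume "e \<in> T"
  have "{i \<in> P. e \<in> (s(p := T)) i} \<subseteq> insert p {i \<in> Q. e \<in> s i}"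
    using assms(2) by auto
  then have "card {i \<in> P. e \<in> (s(p := T)) i} \<le> card (insert p {i \<in> Q. e \<in> s i})"
    using assms(1) by (intro card_mono) auto
  also have "\<dots> \<le> Suc (card {i \<in> Q. e \<in> s i})" by (rule card_insert_le_m1) auto
  finally have "load P (s(p := T)) e \<le> load Q s e + 1" unfolding load_def by simp
  then show "\<alpha> e * load P (s(p := T)) e + \<beta> e \<le> \<alpha> e * (load Q s e + 1) + \<beta> e"
    using assms(3) \<open>e \<in> T\<close> by (simp add: mult_left_mono)
qed

lemma walk_outcome_feasible:
  assumes "one_round_walk_outcome n \<Sigma> \<alpha> \<beta> \<pi> s"
  shows "length \<pi> = n" "feasible n \<Sigma> s"
proof -
  from assms have d: "distinct \<pi>" and set: "set \<pi> = {..<n}"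
    and chosen: "\<forall>k<n. s (\<pi>!k) \<in> \<Sigma> (\<pi>!k)"
    unfolding one_round_walk_outcome_def by auto
  show len: "length \<pi> = n" using distinct_card[OF d] set by simp
  show "feasible n \<Sigma> s" unfolding feasible_def
  proof (intro allI impI)
    fix i assume "i < n"
    then obtain k where "k < length \<pi>" "\<pi> ! k = i" using set by (metis in_set_conv_nth lessThan_iff)
    then show "s i \<in> \<Sigma> i" using chosen len by auto
  qed
qed

lemma walk_bound:
  assumes "finite E"
    and strategies: "\<forall>i<n. \<forall>S\<in>\<Sigma> i. S \<subseteq> E"
    and latencies: "\<forall>e\<in>E. \<alpha> e \<ge> 0 \<and> \<beta> e \<ge> 0"
    and walk: "one_round_walk_outcome n \<Sigma> \<alpha> \<beta> \<pi> s"
    and "feasible n \<Sigma> S"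
  shows "SUMcost n \<alpha> \<beta> s \<le> (2 + sqrt 5) * SUMcost n \<alpha> \<beta> S"
proof -
  have len: "length \<pi> = n" and "feasible n \<Sigma> s" using walk_outcome_feasible[OF walk] by auto
  from walk have d: "distinct \<pi>" and set: "set \<pi> = {..<n}"
    and best: "\<And>k t. k < n \<Longrightarrow> t \<in> \<Sigma> (\<pi>!k) \<Longrightarrow>
        arrival_cost \<alpha> \<beta> \<pi> s k \<le> pcost \<alpha> \<beta> (insert (\<pi>!k) (set (take k \<pi>))) (s(\<pi>!k := t)) (\<pi>!k)"
    unfolding one_round_walk_outcome_def arrival_cost_def by auto
  have sE: "\<forall>i<n. s i \<subseteq> E" and SE: "\<forall>i<n. S i \<subseteq> E"
    using \<open>feasible n \<Sigma> s\<close> \<open>feasible n \<Sigma> S\<close> strategies unfolding feasible_def by auto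
  have order: "bij_betw ((!) \<pi>) {..<n} {..<n}" using bij_betw_nth[OF d] len set by simp
  then have player: "\<pi> ! k < n" if "k < n" for k using that by (auto dest: bij_betwE)
  define a where "a = load {..<n} s"
  define b where "b = load {..<n} S"
  define h where "h = (\<lambda>e. \<alpha> e * (a e + 1) + \<beta> e)"
  define slack where "slack = (\<Sum>e\<in>E. 2 * b e * h e - (\<alpha> e * a e * (a e + 1) + 2 * \<beta> e * a e))"
  have arrivals: "2 * (\<Sum>k<n. arrival_cost \<alpha> \<beta> \<pi> s k)
      = (\<Sum>e\<in>E. \<alpha> e * a e * (a e + 1) + 2 * \<beta> e * a e)"
    using arrival_cost_sum[OF d \<open>finite E\<close>, of s n \<alpha> \<beta>] sE player len set unfolding a_def by simp
  have "arrival_cost \<alpha> \<beta> \<pi> s k \<le> (\<Sum>e\<in>S (\<pi>!k). h e)" if "k < n" for k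
  proof -
    have "S (\<pi>!k) \<in> \<Sigma> (\<pi>!k)" using \<open>feasible n \<Sigma> S\<close> player[OF that] unfolding feasible_def by auto
    have "insert (\<pi>!k) (set (take k \<pi>)) \<subseteq> {..<n}" using set set_take_subset[of k \<pi>] that len by auto
    moreover have "\<forall>e\<in>S (\<pi>!k). \<alpha> e \<ge> 0" using SE latencies player[OF that] by auto
    ultimately have "pcost \<alpha> \<beta> (insert (\<pi>!k) (set (take k \<pi>))) (s(\<pi>!k := S (\<pi>!k))) (\<pi>!k)
        \<le> (\<Sum>e\<in>S (\<pi>!k). h e)"
      unfolding h_def a_def by (intro deviation_cost_le) auto
    then show ?thesis using best[OF that \<open>S (\<pi>!k) \<in> \<Sigma> (\<pi>!k)\<close>] by linarith
  qed
  then have "(\<Sum>k<n. arrival_cost \<alpha> \<beta> \<pi> s k) \<le> (\<Sum>k<n. \<Sum>e\<in>S (\<pi>!k). h e)"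
    by (intro sum_mono) auto
  also have "\<dots> = (\<Sum>i<n. \<Sum>e\<in>S i. h e)"
    using sum.reindex_bij_betw[OF order, of "\<lambda>i. \<Sum>e\<in>S i. h e"] by simp
  also have "\<dots> = (\<Sum>e\<in>E. b e * h e)"
    unfolding b_def using sum_over_strategies[OF \<open>finite E\<close>, of "{..<n}" S h] SE by simp
  finally have deviations: "(\<Sum>k<n. arrival_cost \<alpha> \<beta> \<pi> s k) \<le> (\<Sum>e\<in>E. b e * h e)" .
  have "slack = 2 * (\<Sum>e\<in>E. b e * h e) - (\<Sum>e\<in>E. \<alpha> e * a e * (a e + 1) + 2 * \<beta> e * a e)"
    unfolding slack_def by (simp add: sum_subtractf sum_distrib_left mult.assoc)
  then have "slack \<ge> 0" using arrivals deviations by linarith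
  define \<phi> :: real where "\<phi> = (1 + sqrt 5) / 2"
  have "SUMcost n \<alpha> \<beta> s \<le> SUMcost n \<alpha> \<beta> s + \<phi> * slack"
    using \<open>slack \<ge> 0\<close> unfolding \<phi>_def by simp
  also have "\<dots> = (\<Sum>e\<in>E. a e * (\<alpha> e * a e + \<beta> e)
                      + \<phi> * (2 * b e * h e - (\<alpha> e * a e * (a e + 1) + 2 * \<beta> e * a e)))"
    unfolding SUMcost_by_resource[OF \<open>finite E\<close> sE] slack_def a_def
    by (simp add: sum.distrib sum_distrib_left)
  also have "\<dots> \<le> (\<Sum>e\<in>E. (2 + sqrt 5) * (b e * (\<alpha> e * b e + \<beta> e)))"
  proof (rule sum_mono)
    fix e assume "e \<in> E"
    then have "\<alpha> e \<ge> 0" "\<beta> e \<ge> 0" using latencies by auto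
    from resource_inequality[OF this, of "card {i \<in> {..<n}. e \<in> s i}" "card {i \<in> {..<n}. e \<in> S i}"]
    show "a e * (\<alpha> e * a e + \<beta> e) + \<phi> * (2 * b e * h e - (\<alpha> e * a e * (a e + 1) + 2 * \<beta> e * a e))
        \<le> (2 + sqrt 5) * (b e * (\<alpha> e * b e + \<beta> e))"
      unfolding a_def b_def h_def load_def \<phi>_def .
  qed
  also have "\<dots> = (2 + sqrt 5) * SUMcost n \<alpha> \<beta> S"
    unfolding SUMcost_by_resource[OF \<open>finite E\<close> SE] b_def by (simp add: sum_distrib_left)
  finally show ?thesis .
qed

text \<open>Fixing the strategy of the newly
  arrived player m does not disturb the earlier players, who never see her.\<close>
lemma greedy_profile_exists:
  assumes "\<forall>i<n. \<Sigma> i \<noteq> {} \<and> finite (\<Sigma> i)" "m \<le> n"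
  shows "\<exists>s. \<forall>k<m. s k \<in> \<Sigma> k \<and>
    (\<forall>t\<in>\<Sigma> k. pcost \<alpha> \<beta> (insert k {..<k}) s k \<le> pcost \<alpha> \<beta> (insert k {..<k}) (s(k := t)) k)"
  using assms(2)
proof (induction m)
  case 0
  show ?case by simp
next
  case (Suc m)
  then have "m \<le> n" by simp
  then obtain s where prefix: "\<forall>k<m. s k \<in> \<Sigma> k \<and>
    (\<forall>t\<in>\<Sigma> k. pcost \<alpha> \<beta> (insert k {..<k}) s k \<le> pcost \<alpha> \<beta> (insert k {..<k}) (s(k := t)) k)"
    using Suc.IH by blast
  let ?cost = "\<lambda>t. pcost \<alpha> \<beta> (insert m {..<m}) (s(m := t)) m"
  obtain t where "t \<in> \<Sigma> m" and best: "\<forall>t'\<in>\<Sigma> m. ?cost t \<le> ?cost t'"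
    using ex_is_arg_min_if_finite[of "\<Sigma> m" ?cost] assms(1) Suc.prems
    unfolding is_arg_min_linorder by auto
  have unseen: "pcost \<alpha> \<beta> (insert k {..<k}) (s(m := t, k := t')) k
              = pcost \<alpha> \<beta> (insert k {..<k}) (s(k := t')) k" if "k < m" for k t'
    using that by (intro pcost_cong) auto
  have "\<forall>k<Suc m. (s(m := t)) k \<in> \<Sigma> k \<and> (\<forall>t'\<in>\<Sigma> k.
     pcost \<alpha> \<beta> (insert k {..<k}) (s(m := t)) k \<le> pcost \<alpha> \<beta> (insert k {..<k}) (s(m := t, k := t')) k)"
  proof (intro allI impI)
    fix k assume "k < Suc m"
    then consider "k < m" | "k = m" by linarith
    then show "(s(m := t)) k \<in> \<Sigma> k \<and> (\<forall>t'\<in>\<Sigma> k.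
     pcost \<alpha> \<beta> (insert k {..<k}) (s(m := t)) k \<le> pcost \<alpha> \<beta> (insert k {..<k}) (s(m := t, k := t')) k)"
    proof cases
      case 1
      have "pcost \<alpha> \<beta> (insert k {..<k}) (s(m := t)) k = pcost \<alpha> \<beta> (insert k {..<k}) s k"
        using 1 by (intro pcost_cong) auto
      then show ?thesis using prefix unseen[OF 1] 1 by simp
    next
      case 2
      then show ?thesis using \<open>t \<in> \<Sigma> m\<close> best by simp
    qed
  qed
  then show ?case by blast
qed

lemma walk_exists:
  assumes "\<forall>i<n. \<Sigma> i \<noteq> {} \<and> finite (\<Sigma> i)"
  shows "\<exists>\<pi> s. one_round_walk_outcome n \<Sigma> \<alpha> \<beta> \<pi> s"
proof -
  obtain s where "\<forall>k<n. s k \<in> \<Sigma> k \<and>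
    (\<forall>t\<in>\<Sigma> k. pcost \<alpha> \<beta> (insert k {..<k}) s k \<le> pcost \<alpha> \<beta> (insert k {..<k}) (s(k := t)) k)"
    using greedy_profile_exists[OF assms order_refl] by blast
  moreover have "[0..<n] ! k = k" "set (take k [0..<n]) = {..<k}" if "k < n" for k
    using that by (auto simp: take_upt atLeast0LessThan)
  ultimately have "one_round_walk_outcome n \<Sigma> \<alpha> \<beta> [0..<n] s"
    unfolding one_round_walk_outcome_def by (simp add: atLeast0LessThan)
  then show ?thesis by blast
qed

text \<open>Turning a cost bound into a bound on the ratio to the optimum: if x is at most rho times
  every element of a nonempty set Y of nonnegative reals, then x / Inf Y is at most rho
  (when Inf Y = 0, division by zero yields 0).\<close>
lemma ratio_to_Inf_le:
  fixes Y :: "real set"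
  assumes "Y \<noteq> {}" "\<forall>y\<in>Y. 0 \<le> y" "\<forall>y\<in>Y. x \<le> \<rho> * y" "\<rho> > 0"
  shows "x / Inf Y \<le> \<rho>"
proof -
  have "Inf Y \<ge> 0" using assms(1,2) by (intro cInf_greatest) auto
  moreover have "x / \<rho> \<le> Inf Y"
    using assms by (intro cInf_greatest) (auto simp: divide_le_eq mult.commute)
  ultimately show ?thesis
    using assms(4) by (cases "Inf Y = 0") (auto simp: divide_le_eq mult.commute)
qed

theorem mainTheorem7:
  fixes n :: nat and E :: "'e set" and \<Sigma> :: "nat \<Rightarrow> 'e set set"
    and \<alpha> \<beta> :: "'e \<Rightarrow> real"
  assumes "finite E"
    and "\<forall>i<n. \<Sigma> i \<noteq> {} \<and> finite (\<Sigma> i) \<and> (\<forall>S\<in>\<Sigma> i. S \<subseteq> E)"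
    and "\<forall>e\<in>E. \<alpha> e \<ge> 0 \<and> \<beta> e \<ge> 0"
  shows "Apx1_empty n \<Sigma> \<alpha> \<beta> \<le> 2 + sqrt 5"
proof -
  let ?Y = "{SUMcost n \<alpha> \<beta> S | S. feasible n \<Sigma> S}"
  have nonempty: "\<forall>i<n. \<Sigma> i \<noteq> {} \<and> finite (\<Sigma> i)"
    and strategies: "\<forall>i<n. \<forall>S\<in>\<Sigma> i. S \<subseteq> E" using assms(2) by auto
  have "feasible n \<Sigma> (\<lambda>i. SOME t. t \<in> \<Sigma> i)"
    unfolding feasible_def using nonempty by (simp add: some_in_eq)
  then have "?Y \<noteq> {}" by blast
  have "\<forall>y\<in>?Y. 0 \<le> y"
  proof clarify
    fix S assume "feasible n \<Sigma> S"
    then have "\<forall>i<n. S i \<subseteq> E" using strategies unfolding feasible_def by blast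
    then show "0 \<le> SUMcost n \<alpha> \<beta> S" using assms(3) by (rule SUMcost_nonneg)
  qed
  obtain \<pi>0 s0 where "one_round_walk_outcome n \<Sigma> \<alpha> \<beta> \<pi>0 s0"
    using walk_exists[OF nonempty] by blast
  then show ?thesis
    unfolding Apx1_empty_def OPT_def
  proof (intro cSup_least)
    show "{SUMcost n \<alpha> \<beta> s / Inf ?Y | s. \<exists>\<pi>. one_round_walk_outcome n \<Sigma> \<alpha> \<beta> \<pi> s} \<noteq> {}"
      using \<open>one_round_walk_outcome n \<Sigma> \<alpha> \<beta> \<pi>0 s0\<close> by blast
  next
    fix r assume "r \<in> {SUMcost n \<alpha> \<beta> s / Inf ?Y | s. \<exists>\<pi>. one_round_walk_outcome n \<Sigma> \<alpha> \<beta> \<pi> s}"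
    then obtain s \<pi> where r: "r = SUMcost n \<alpha> \<beta> s / Inf ?Y"
      and walk: "one_round_walk_outcome n \<Sigma> \<alpha> \<beta> \<pi> s" by blast
    have "\<forall>y\<in>?Y. SUMcost n \<alpha> \<beta> s \<le> (2 + sqrt 5) * y"
      using walk_bound[OF assms(1) strategies assms(3) walk] by auto
    then show "r \<le> 2 + sqrt 5"
      unfolding r using ratio_to_Inf_le[OF \<open>?Y \<noteq> {}\<close> \<open>\<forall>y\<in>?Y. 0 \<le> y\<close>]
      by (simp add: add_pos_nonneg)
  qed
qed

end
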